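(* Let $r,k\geq 2$ and let $n\geq r+1$ be an integer with $n\nrightarrow(r+1)_k^r$. If a hypergraph $(V,E)$ admits a vertex colouring $V\to\{0,\dots,n-1\}$ under which no hyperedge of size $\geq r+1$ is monochromatic, then there is a colouring of the $r$-subsets of $V$ with $k+f(r)$ colours such that no hyperedge of size $\geq r+1$ is monochromatic (i.e. has all its $r$-subsets of the same colour), where $f(2)=1$, $f(3)=3$, $f(r)=4$ if $r\geq4$ and $r+1$ is prime, and $f(r)=5$ otherwise.
   Context: For $m\in\mathbb N$ write $[m]=\{0,\dots,m-1\}$. The relation $n\to(s)_k^r$ (for $n\geq s>r$, $k\geq2$) means that every colouring of the $r$-element subsets of $[n]$ with $k$ colours has a subset of $[n]$ of size $s$ all of whose $r$-subsets receive the same colour; $n\nrightarrow(s)_k^r$ is its negation. A vertex colouring makes a hyperedge monochromatic if all its vertices get the same colour. *)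

theory Defs
  imports "HOL-Computational_Algebra.Primes"
begin

definition mono_rsets :: "nat \<Rightarrow> ('a set \<Rightarrow> nat) \<Rightarrow> 'a set \<Rightarrow> bool" where
  "mono_rsets r chi H \<longleftrightarrow> (\<exists>c. \<forall>S. S \<subseteq> H \<and> card S = r \<longrightarrow> chi S = c)"

text \<open>The partition relation n -> (s)^r_k on [n] = {0..<n}.\<close>
definition arrows :: "nat \<Rightarrow> nat \<Rightarrow> nat \<Rightarrow> nat \<Rightarrow> bool" where
  "arrows n s k r \<longleftrightarrow>
     (\<forall>chi :: nat set \<Rightarrow> nat.
        (\<forall>S. S \<subseteq> {..<n} \<and> card S = r \<longrightarrow> chi S < k) \<longrightarrow>
        (\<exists>H. H \<subseteq> {..<n} \<and> card H = s \<and> mono_rsets r chi H))"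

definition size_ge :: "nat \<Rightarrow> 'a set \<Rightarrow> bool" where
  "size_ge m e \<longleftrightarrow> infinite e \<or> m \<le> card e"

definition fcol :: "nat \<Rightarrow> nat" where
  "fcol r = (if r = 2 then 1 else if r = 3 then 3 else if prime (r + 1) then 4 else 5)"

end

theory Submission
  imports Defs
begin

text \<open>Given a colouring \<open>chi0\<close> of the \<open>r\<close>-subsets of \<open>[n]\<close> with \<open>k\<close> colours and no monochromatic
  \<open>(r+1)\<close>-set, and a vertex colouring \<open>c\<close> with \<open>n\<close> colours, colour an \<open>r\<close>-set \<open>S\<close> of vertices by
  \<open>chi0 (c ` S)\<close> if \<open>c\<close> is injective on \<open>S\<close>, and otherwise by one of a few extra colours
  recording two parities: of the number of colours on \<open>S\<close>, and of the size of the class of the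
  smallest colour. Take an \<open>(r+1)\<close>-subset \<open>e\<close> of a hyperedge that is not monochromatic under \<open>c\<close>.
  If one \<open>r\<close>-subset of \<open>e\<close> is rainbow, monochromaticity forces all of them to be, so \<open>c\<close> is
  injective on \<open>e\<close> and \<open>c ` e\<close> would be monochromatic for \<open>chi0\<close>. If none is rainbow, deleting a
  vertex of unique colour and deleting a vertex of repeated colour change the first parity
  differently; if every colour is repeated, deleting a vertex of minimal colour or one of
  another colour changes the second parity differently.\<close>

text \<open>The second bit is the sum of the two parities rather than the second parity itself, so that
  the three patterns possible on a non-injective triple get the codes 0, 1, 2.\<close>

definition defect_code :: "('a \<Rightarrow> nat) \<Rightarrow> 'a set \<Rightarrow> nat" where
  "defect_code c S = 2 * (card (c ` S) mod 2) +
     (card (c ` S) + card {x \<in> S. c x = Min (c ` S)}) mod 2"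

definition lifted_colouring ::
    "nat \<Rightarrow> nat \<Rightarrow> (nat set \<Rightarrow> nat) \<Rightarrow> ('a \<Rightarrow> nat) \<Rightarrow> 'a set \<Rightarrow> nat" where
  "lifted_colouring r k chi0 c S =
     (if inj_on c S then chi0 (c ` S) else k + (if r = 2 then 0 else defect_code c S))"

lemma two_bit_code_eqD:
  fixes a b a' b' :: nat
  assumes "2 * (a mod 2) + (a + b) mod 2 = 2 * (a' mod 2) + (a' + b') mod 2"
  shows "a mod 2 = a' mod 2" and "b mod 2 = b' mod 2"
proof -
  have "(a + b) mod 2 = (a mod 2 + b mod 2) mod 2" "(a' + b') mod 2 = (a' mod 2 + b' mod 2) mod 2"
    by (simp_all add: mod_add_eq)
  moreover have "a mod 2 \<in> {0, 1}" "b mod 2 \<in> {0, 1}" "a' mod 2 \<in> {0, 1}" "b' mod 2 \<in> {0, 1}"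
    by auto
  ultimately show "a mod 2 = a' mod 2" "b mod 2 = b' mod 2"
    using assms by auto
qed

lemma defect_code_eqD:
  assumes "defect_code c S = defect_code c T"
  shows "card (c ` S) mod 2 = card (c ` T) mod 2"
    and "card {x \<in> S. c x = Min (c ` S)} mod 2 = card {x \<in> T. c x = Min (c ` T)} mod 2"
  using two_bit_code_eqD assms unfolding defect_code_def by blast+

lemma defect_code_less_card3:
  assumes "card S = 3" and "\<not> inj_on c S"
  shows "defect_code c S < 3"
proof -
  have "finite S" "S \<noteq> {}"
    using assms(1) card.infinite by fastforce+
  then have "card (c ` S) < 3" "card (c ` S) \<noteq> 0"
    using assms card_image_le[of S c] inj_on_iff_eq_card[of S c] by fastforce+
  then consider "card (c ` S) = 1" | "card (c ` S) = 2"
    by linarith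
  then show ?thesis
  proof cases
    case 1
    then have "{x \<in> S. c x = Min (c ` S)} = S"
      by (fastforce elim: card_1_singletonE)
    then show ?thesis
      using 1 assms(1) by (simp add: defect_code_def)
  next
    case 2
    then show ?thesis
      by (simp add: defect_code_def)
  qed
qed

text \<open>For \<open>r \<ge> 4\<close> four extra colours always suffice.\<close>

lemma lifted_colouring_less:
  assumes "r \<ge> 2" and "card S = r" and "c ` S \<subseteq> {..<n}"
    and "\<forall>T. T \<subseteq> {..<n} \<and> card T = r \<longrightarrow> chi0 T < k"
  shows "lifted_colouring r k chi0 c S < k + fcol r"
proof (cases "inj_on c S")
  case True
  then have "chi0 (c ` S) < k"
    using assms by (simp add: card_image)
  then show ?thesis
    using True by (simp add: lifted_colouring_def)
next
  case False
  have "defect_code c S < 4"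
    unfolding defect_code_def by simp
  moreover have "defect_code c S < 3" if "r = 3"
    using defect_code_less_card3 False assms(2) that by blast
  ultimately show ?thesis
    using False assms(1) by (auto simp: lifted_colouring_def fcol_def)
qed

lemma mod_2_diff_1_neq: "m \<noteq> 0 \<Longrightarrow> (m - 1) mod 2 \<noteq> (m::nat) mod 2"
  by (cases m) (auto simp: mod_Suc)

lemma image_Diff_singleton_eq:
  assumes "z \<in> e" "z \<noteq> x" "c z = c x"
  shows "c ` (e - {x}) = c ` e"
proof
  show "c ` e \<subseteq> c ` (e - {x})"
  proof
    fix b assume "b \<in> c ` e"
    then obtain y where "y \<in> e" "b = c y" by blast
    moreover have "c z \<in> c ` (e - {x})"
      using assms(1,2) by simp
    ultimately show "b \<in> c ` (e - {x})"
      using assms(3) by (cases "y = x") auto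
  qed
qed auto

lemma defect_code_separates:
  assumes fin: "finite e" and "u \<in> e" "w \<in> e" "c u \<noteq> c w"
    and non_inj: "\<forall>x\<in>e. \<not> inj_on c (e - {x})"
  shows "\<exists>x\<in>e. \<exists>y\<in>e. defect_code c (e - {x}) \<noteq> defect_code c (e - {y})"
proof -
  define repeated where "repeated x \<longleftrightarrow> (\<exists>z\<in>e. z \<noteq> x \<and> c z = c x)" for x
  have img_repeated: "c ` (e - {x}) = c ` e" if "repeated x" for x
    using that image_Diff_singleton_eq unfolding repeated_def by metis
  have "\<exists>y\<in>e. repeated y"
  proof (rule ccontr)
    assume "\<not> (\<exists>y\<in>e. repeated y)"
    then have "inj_on c e"
      unfolding inj_on_def repeated_def by blast
    then show False
      using non_inj \<open>u \<in> e\<close> inj_on_subset[of c e "e - {u}"] by blast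
  qed
  then obtain y where y: "y \<in> e" "repeated y" by blast
  show ?thesis
  proof (cases "\<exists>x\<in>e. \<not> repeated x")
    case True
    then obtain x where x: "x \<in> e" "\<not> repeated x" by blast
    then have "c ` (e - {x}) = c ` e - {c x}"
      unfolding repeated_def by auto
    then have "card (c ` (e - {x})) = card (c ` e) - 1"
      using x fin by simp
    moreover have "card (c ` e) \<noteq> 0"
      using fin x(1) by auto
    ultimately have "card (c ` (e - {x})) mod 2 \<noteq> card (c ` (e - {y})) mod 2"
      using img_repeated[OF y(2)] mod_2_diff_1_neq by simp
    then have "defect_code c (e - {x}) \<noteq> defect_code c (e - {y})"
      using defect_code_eqD(1)[of c "e - {x}" "e - {y}"] by blast
    then show ?thesis
      using x(1) y(1) by blast
  next
    case False
    define v where "v = Min (c ` e)"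
    have "v \<in> c ` e"
      unfolding v_def using fin \<open>u \<in> e\<close> by (intro Min_in) auto
    then obtain x where x: "x \<in> e" "c x = v" by auto
    obtain z where z: "z \<in> e" "c z \<noteq> v"
      using assms(2-4) by (cases "c u = v") auto
    define C where "C = {a \<in> e. c a = v}"
    have "card C \<noteq> 0" "x \<in> C"
      using x fin unfolding C_def by auto
    then have "card (C - {x}) mod 2 \<noteq> card C mod 2"
      using mod_2_diff_1_neq[of "card C"] by simp
    moreover have "{a \<in> e - {x}. c a = Min (c ` (e - {x}))} = C - {x}"
      using img_repeated False x(1) unfolding C_def v_def by auto
    moreover have "{a \<in> e - {z}. c a = Min (c ` (e - {z}))} = C"
      using img_repeated False z unfolding C_def v_def by auto
    ultimately have "defect_code c (e - {x}) \<noteq> defect_code c (e - {z})"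
      using defect_code_eqD(2)[of c "e - {x}" "e - {z}"] by argo
    then show ?thesis
      using x(1) z(1) by blast
  qed
qed

lemma inj_on_if_inj_on_Diff_singletons:
  assumes "card e \<ge> 3" and "\<forall>z\<in>e. inj_on c (e - {z})"
  shows "inj_on c e"
  unfolding inj_on_def
proof (intro ballI impI)
  fix a b assume ab: "a \<in> e" "b \<in> e" "c a = c b"
  have "card e - card {a, b} \<le> card (e - {a, b})"
    by (rule diff_card_le_card_Diff) simp
  moreover have "card {a, b} \<le> 2"
    by (simp add: card_insert_if)
  ultimately have "e - {a, b} \<noteq> {}"
    using assms(1) by fastforce
  then obtain z where "z \<in> e" "a \<in> e - {z}" "b \<in> e - {z}"
    using ab by blast
  then show "a = b"
    using assms(2) ab(3) inj_onD by metis
qed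

lemma mono_rsets_image_if_deletions:
  assumes "inj_on c e" and "card e = r + 1"
    and "\<forall>z\<in>e. chi (c ` (e - {z})) = col"
  shows "mono_rsets r chi (c ` e)"
  unfolding mono_rsets_def
proof (intro exI allI impI)
  fix T assume T: "T \<subseteq> c ` e \<and> card T = r"
  have "finite e"
    using assms(2) card.infinite by fastforce
  then have "finite T"
    using T finite_subset by blast
  then have "card (c ` e - T) = 1"
    using T assms(1,2) by (simp add: card_Diff_subset card_image)
  then obtain h where h: "c ` e - T = {h}"
    by (rule card_1_singletonE)
  then obtain z where z: "z \<in> e" "h = c z" by blast
  have "c ` (e - {z}) = c ` e - {c z}"
    using assms(1) z(1) by (auto simp: inj_on_def)
  then have "c ` (e - {z}) = T"
    using T h z(2) by blast
  then show "chi T = col"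
    using assms(3) z(1) by blast
qed

lemma mono_rsets_subset: "mono_rsets r chi e \<Longrightarrow> e' \<subseteq> e \<Longrightarrow> mono_rsets r chi e'"
  unfolding mono_rsets_def by (meson subset_trans)

lemma lifted_colouring_not_mono_card:
  assumes r: "r \<ge> 2" and card_e: "card e = r + 1"
    and uw: "u \<in> e" "w \<in> e" "c u \<noteq> c w" and c_e: "c ` e \<subseteq> {..<n}"
    and chi0_less: "\<forall>T. T \<subseteq> {..<n} \<and> card T = r \<longrightarrow> chi0 T < k"
    and chi0_free: "\<not> (\<exists>H. H \<subseteq> {..<n} \<and> card H = r + 1 \<and> mono_rsets r chi0 H)"
  shows "\<not> mono_rsets r (lifted_colouring r k chi0 c) e"
proof
  let ?chi = "lifted_colouring r k chi0 c"
  have fin: "finite e"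
    using card_e card.infinite by fastforce
  have card_del: "card (e - {x}) = r" if "x \<in> e" for x
    using that fin card_e by simp
  assume "mono_rsets r ?chi e"
  then obtain col where col: "?chi (e - {x}) = col" if "x \<in> e" for x
    using card_del unfolding mono_rsets_def by (meson Diff_subset)
  have rainbow_col: "col < k" if "x \<in> e" "inj_on c (e - {x})" for x
  proof -
    have "c ` (e - {x}) \<subseteq> {..<n}" "card (c ` (e - {x})) = r"
      using that c_e card_del by (auto simp: card_image)
    then have "chi0 (c ` (e - {x})) < k"
      using chi0_less by blast
    then show ?thesis
      using col[OF that(1)] that(2) by (simp add: lifted_colouring_def)
  qed
  have defect_col: "col = k + (if r = 2 then 0 else defect_code c (e - {x}))"
    if "x \<in> e" "\<not> inj_on c (e - {x})" for x
    using col[OF that(1)] that(2) by (simp add: lifted_colouring_def)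
  show False
  proof (cases "\<exists>x\<in>e. inj_on c (e - {x})")
    case True
    then have all_inj: "\<forall>z\<in>e. inj_on c (e - {z})"
      using rainbow_col defect_col by fastforce
    then have inj: "inj_on c e"
      using inj_on_if_inj_on_Diff_singletons[of e c] card_e r by simp
    have "\<forall>z\<in>e. chi0 (c ` (e - {z})) = col"
      using all_inj col by (simp add: lifted_colouring_def)
    then have "mono_rsets r chi0 (c ` e)"
      using mono_rsets_image_if_deletions[OF inj card_e] by blast
    moreover have "card (c ` e) = r + 1"
      using inj card_e by (simp add: card_image)
    ultimately show False
      using chi0_free c_e by blast
  next
    case False
    then have non_inj: "\<forall>x\<in>e. \<not> inj_on c (e - {x})" by blast
    show False
    proof (cases "r = 2")
      case True
      have "u \<noteq> w"
        using uw(3) by blast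
      then have "card (e - {u, w}) = 1"
        using fin card_e True uw(1,2) by (simp add: card_Diff_subset)
      then obtain z where "e - {u, w} = {z}"
        by (rule card_1_singletonE)
      then have "z \<in> e" "e - {z} = {u, w}"
        using uw(1,2) by auto
      then show False
        using non_inj uw(3) by force
    next
      case False
      obtain x y where xy: "x \<in> e" "y \<in> e" "defect_code c (e - {x}) \<noteq> defect_code c (e - {y})"
        using defect_code_separates[OF fin uw non_inj] by blast
      have "col = k + defect_code c (e - {x})" "col = k + defect_code c (e - {y})"
        using defect_col[OF xy(1)] defect_col[OF xy(2)] non_inj xy(1,2) False by auto
      then show False
        using xy(3) by simp
    qed
  qed
qed

lemma size_ge_obtain_subset:
  assumes "size_ge m e" and "m \<ge> 2" and "u \<in> e" "w \<in> e" "u \<noteq> w"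
  obtains e' where "e' \<subseteq> e" "card e' = m" "u \<in> e'" "w \<in> e'"
proof -
  obtain D where D: "D \<subseteq> e - {u, w}" "finite D" "card D = m - 2"
  proof (cases "finite e")
    case True
    then have "m - 2 \<le> card (e - {u, w})"
      using assms by (simp add: size_ge_def card_Diff_subset)
    then show ?thesis
      using that obtain_subset_with_card_n by metis
  next
    case False
    then have "infinite (e - {u, w})"
      by simp
    then obtain D where "finite D" "card D = m - 2" "D \<subseteq> e - {u, w}"
      using infinite_arbitrarily_large[of "e - {u, w}" "m - 2"] by blast
    then show ?thesis
      using that by blast
  qed
  then have "card (insert u (insert w D)) = m"
    using assms(2,5) by (auto simp: card_insert_if)
  then show ?thesis
    using D assms(3,4) by (intro that[of "insert u (insert w D)"]) auto
qed
lemma lifted_colouring_not_mono: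
  assumes "r \<ge> 2" and "size_ge (r + 1) e" and "\<not> (\<exists>i. \<forall>v\<in>e. c v = i)"
    and "c ` e \<subseteq> {..<n}"
    and chi0_less: "\<forall>T. T \<subseteq> {..<n} \<and> card T = r \<longrightarrow> chi0 T < k"
    and chi0_free: "\<not> (\<exists>H. H \<subseteq> {..<n} \<and> card H = r + 1 \<and> mono_rsets r chi0 H)"
  shows "\<not> mono_rsets r (lifted_colouring r k chi0 c) e"
proof -
  have "e \<noteq> {}"
    using assms(1,2) by (auto simp: size_ge_def)
  then obtain u w where uw: "u \<in> e" "w \<in> e" "c u \<noteq> c w"
    using assms(3) by blast
  have "r + 1 \<ge> 2" "u \<noteq> w"
    using assms(1) uw(3) by auto
  then obtain e' where e': "e' \<subseteq> e" "card e' = r + 1" "u \<in> e'" "w \<in> e'"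
    using size_ge_obtain_subset[OF assms(2) _ uw(1,2)] by blast
  have "c ` e' \<subseteq> {..<n}"
    using e'(1) assms(4) by blast
  then have "\<not> mono_rsets r (lifted_colouring r k chi0 c) e'"
    by (rule lifted_colouring_not_mono_card[OF assms(1) e'(2-4) uw(3) _ chi0_less chi0_free])
  then show ?thesis
    using mono_rsets_subset e'(1) by blast
qed

theorem theorem4p3:
  fixes V :: "'a set" and E :: "'a set set" and r k n :: nat
  assumes "r \<ge> 2" and "k \<ge> 2" and "n \<ge> r + 1"
    and "\<not> arrows n (r + 1) k r"
    and "\<forall>e\<in>E. e \<subseteq> V"
    and "\<exists>c :: 'a \<Rightarrow> nat. (\<forall>v\<in>V. c v < n) \<and>
           (\<forall>e\<in>E. size_ge (r + 1) e \<longrightarrow> \<not> (\<exists>i. \<forall>v\<in>e. c v = i))"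
  shows "\<exists>chi :: 'a set \<Rightarrow> nat.
           (\<forall>S. S \<subseteq> V \<and> card S = r \<longrightarrow> chi S < k + fcol r) \<and>
           (\<forall>e\<in>E. size_ge (r + 1) e \<longrightarrow> \<not> mono_rsets r chi e)"
proof -
  obtain c :: "'a \<Rightarrow> nat" where cV: "\<forall>v\<in>V. c v < n"
    and cE: "\<forall>e\<in>E. size_ge (r + 1) e \<longrightarrow> \<not> (\<exists>i. \<forall>v\<in>e. c v = i)"
    using assms(6) by blast
  obtain chi0 :: "nat set \<Rightarrow> nat" where chi0_less: "\<forall>S. S \<subseteq> {..<n} \<and> card S = r \<longrightarrow> chi0 S < k"
    and chi0_free: "\<not> (\<exists>H. H \<subseteq> {..<n} \<and> card H = r + 1 \<and> mono_rsets r chi0 H)"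
    using assms(4) unfolding arrows_def by blast
  have c_image: "c ` S \<subseteq> {..<n}" if "S \<subseteq> V" for S
    using that cV by auto
  show ?thesis
  proof (intro exI[of _ "lifted_colouring r k chi0 c"] conjI allI ballI impI)
    fix S assume "S \<subseteq> V \<and> card S = r"
    then show "lifted_colouring r k chi0 c S < k + fcol r"
      using lifted_colouring_less[OF assms(1) _ c_image chi0_less] by blast
  next
    fix e assume "e \<in> E" "size_ge (r + 1) e"
    then show "\<not> mono_rsets r (lifted_colouring r k chi0 c) e"
      using lifted_colouring_not_mono[OF assms(1) _ _ c_image chi0_less chi0_free] cE assms(5)
      by blast
  qed
qed

end
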